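(* Let $F$ be a field, let $L_1,\dots,L_m$ be finite separable field extensions of $F$, and let $r_1,\dots,r_m$ be positive integers. Let $L=\prod_{i=1}^m L_i$ and $L'=\prod_{i=1}^m\big(\prod^{r_i}L_i\big)$ (the étale algebra in which $L_i$ appears $r_i$ times). Then $T_{L/F}(F)/R\simeq T_{L'/F}(F)/R$.
   Context: For an étale algebra $E=\prod_j E_j$ over $F$ (a product of finite separable field extensions), the multinorm torus $T_{E/F}$ is the kernel of $\prod_j R_{E_j/F}\mathbb{G}_m\to\mathbb{G}_m$, $(x_j)\mapsto\prod_j N_{E_j/F}(x_j)$. For a torus $T$ over $F$, $T(F)/R$ is the quotient of $T(F)$ by the subgroup of elements $R$-equivalent to the identity, $R$-equivalence being generated by: $x_0\sim x_1$ if some $F$-rational map $f:\mathbb{P}^1\dashrightarrow T$ satisfies $f(0)=x_0$, $f(1)=x_1$. *)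

theory Defs
  imports "HOL-Algebra.Coset" "HOL-Computational_Algebra.Polynomial_Factorial"
    "Jordan_Normal_Form.Determinant"
begin

text \<open>A finite separable field extension L of F is presented (primitive element
theorem) as L = F[x]/(p) with p monic, irreducible and separable. Elements of L
are represented by their reduced representatives: polynomials of degree < deg p.\<close>

definition separable_poly :: "'b::field poly \<Rightarrow> bool" where
  "separable_poly p \<longleftrightarrow> coprime p (pderiv p)"

definition sep_ext_poly :: "'b::field poly \<Rightarrow> bool" where
  "sep_ext_poly p \<longleftrightarrow> lead_coeff p = 1 \<and> irreducible p \<and> separable_poly p"

text \<open>Norm N_{L/K}(a), L = K[x]/(p): determinant of multiplication by a
on the K-basis 1, x, ..., x^(n-1), n = deg p.\<close>

definition mult_matrix :: "'b::field poly \<Rightarrow> 'b poly \<Rightarrow> 'b mat" where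
  "mult_matrix p a = mat (degree p) (degree p)
     (\<lambda>(i,j). coeff ((monom 1 j * a) mod p) i)"

definition alg_norm :: "'b::field poly \<Rightarrow> 'b poly \<Rightarrow> 'b" where
  "alg_norm p a = det (mult_matrix p a)"

text \<open>K-points of the multinorm torus of the etale algebra E = prod_j K[x]/(ps!j)
(over the base field K = 'b): tuples (x_j) with x_j in E_j and prod_j N(x_j) = 1.\<close>

definition torus_points :: "'b::field poly list \<Rightarrow> 'b poly list set" where
  "torus_points ps = {xs. length xs = length ps
       \<and> (\<forall>j<length ps. degree (xs!j) < degree (ps!j))
       \<and> (\<Prod>j<length ps. alg_norm (ps!j) (xs!j)) = 1}"

definition torus_group :: "'b::field poly list \<Rightarrow> 'b poly list monoid" where
  "torus_group ps = \<lparr> partial_object.carrier = torus_points ps,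
     monoid.mult = (\<lambda>xs ys. map (\<lambda>j. (xs!j * ys!j) mod (ps!j)) [0..<length ps]),
     monoid.one = replicate (length ps) 1 \<rparr>"

definition const_ft :: "'a::field \<Rightarrow> 'a poly fract" where
  "const_ft c = to_fract [:c:]"

definition regular_at :: "'a::field \<Rightarrow> 'a poly fract \<Rightarrow> bool" where
  "regular_at c q \<longleftrightarrow> (\<exists>n d. poly d c \<noteq> 0 \<and> q = Fract n d)"

definition eval_at :: "'a::field \<Rightarrow> 'a poly fract \<Rightarrow> 'a" where
  "eval_at c q = (THE v. \<exists>n d. poly d c \<noteq> 0 \<and> q = Fract n d \<and> v = poly n c / poly d c)"

text \<open>F-rational maps P^1 -> T, i.e. F(t)-points of T, and the elementary
R-equivalence link: f defined at t = 0 and t = 1 with f(0) = x0, f(1) = x1.\<close>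

definition R_link :: "'a::field poly list \<Rightarrow> 'a poly list \<Rightarrow> 'a poly list \<Rightarrow> bool" where
  "R_link ps x0 x1 \<longleftrightarrow> x0 \<in> torus_points ps \<and> x1 \<in> torus_points ps \<and>
     (\<exists>f. f \<in> torus_points (map (map_poly const_ft) ps)
        \<and> (\<forall>j<length f. \<forall>k. regular_at 0 (coeff (f!j) k) \<and> regular_at 1 (coeff (f!j) k))
        \<and> map (map_poly (eval_at 0)) f = x0
        \<and> map (map_poly (eval_at 1)) f = x1)"

definition R_equiv :: "'a::field poly list \<Rightarrow> 'a poly list \<Rightarrow> 'a poly list \<Rightarrow> bool" where
  "R_equiv ps = equivclp (R_link ps)"

definition R_trivial :: "'a::field poly list \<Rightarrow> 'a poly list set" where
  "R_trivial ps = {x \<in> torus_points ps. R_equiv ps x (replicate (length ps) 1)}"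

definition torus_mod_R :: "'a::field poly list \<Rightarrow> 'a poly list set monoid" where
  "torus_mod_R ps = torus_group ps Mod R_trivial ps"

end

theory Submission
  imports Defs
begin

text \<open>The group T_{L/F}(F)/R depends only on the set of factors of L. Permuting the factors just
  permutes coordinates. For a repeated factor L_1, multiplication (x_0, x_1, y) \<mapsto> (x_0 x_1, y)
  maps T_{L_1 \<times> L_1 \<times> E} onto T_{L_1 \<times> E} with section y \<mapsto> (y_0, 1, y'), and both maps send
  rational curves to rational curves; so it suffices that (x_0, x_1, y') is R-equivalent to
  (x_0 x_1, 1, y'), i.e. that (a, a^(-1), 1) is R-trivial for every unit a of L_1. With
  n = [L_1 : F] and g = (1 - t) + t a, the F(t)-point (g^(n-k)/N(g), g^k, 1) of the torus has norm
  N(g)^(-n) N(g)^(n-k) N(g)^k = 1 and joins 1 to (a^(n-k)/N(a), a^k, 1); the cases k = 0 and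
  k = 1 (for a and a^(-1)) combine to (a, a^(-1), 1).\<close>

section \<open>Partial ring homomorphisms\<close>

text \<open>Specialising t to c is a ring homomorphism F(t) \<rightarrow> F only on the subring of functions
  regular at c, hence homomorphisms h defined on a subring S only.\<close>

locale partial_ring_hom =
  fixes S :: "'a::field set" and h :: "'a \<Rightarrow> 'b::field"
  assumes zero_closed: "0 \<in> S" and one_closed: "1 \<in> S"
    and add_closed: "\<And>x y. x \<in> S \<Longrightarrow> y \<in> S \<Longrightarrow> x + y \<in> S"
    and mult_closed: "\<And>x y. x \<in> S \<Longrightarrow> y \<in> S \<Longrightarrow> x * y \<in> S"
    and uminus_closed: "\<And>x. x \<in> S \<Longrightarrow> - x \<in> S"
    and hom_zero: "h 0 = 0" and hom_one: "h 1 = 1"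
    and hom_add: "\<And>x y. x \<in> S \<Longrightarrow> y \<in> S \<Longrightarrow> h (x + y) = h x + h y"
    and hom_mult: "\<And>x y. x \<in> S \<Longrightarrow> y \<in> S \<Longrightarrow> h (x * y) = h x * h y"
begin

lemma diff_closed: "x \<in> S \<Longrightarrow> y \<in> S \<Longrightarrow> x - y \<in> S"
  using add_closed uminus_closed by (metis diff_conv_add_uminus)

lemma hom_uminus:
  assumes "x \<in> S" shows "h (- x) = - h x"
proof -
  have "h x + h (- x) = 0"
    using hom_add[OF assms uminus_closed[OF assms]] hom_zero by simp
  then show ?thesis by (simp add: eq_neg_iff_add_eq_0 add.commute)
qed

lemma hom_diff: "x \<in> S \<Longrightarrow> y \<in> S \<Longrightarrow> h (x - y) = h x - h y"
  using hom_add hom_uminus uminus_closed by (metis diff_conv_add_uminus)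

lemma sum_closed: "(\<And>a. a \<in> A \<Longrightarrow> f a \<in> S) \<Longrightarrow> sum f A \<in> S"
  by (induction A rule: infinite_finite_induct) (simp_all add: zero_closed add_closed)

lemma hom_sum: "(\<And>a. a \<in> A \<Longrightarrow> f a \<in> S) \<Longrightarrow> h (sum f A) = (\<Sum>a\<in>A. h (f a))"
  by (induction A rule: infinite_finite_induct) (simp_all add: hom_zero hom_add sum_closed)

lemma prod_closed: "(\<And>a. a \<in> A \<Longrightarrow> f a \<in> S) \<Longrightarrow> prod f A \<in> S"
  by (induction A rule: infinite_finite_induct) (simp_all add: one_closed mult_closed)

lemma hom_prod: "(\<And>a. a \<in> A \<Longrightarrow> f a \<in> S) \<Longrightarrow> h (prod f A) = (\<Prod>a\<in>A. h (f a))"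
  by (induction A rule: infinite_finite_induct) (simp_all add: hom_one hom_mult prod_closed)

lemma sign_closed: "of_int (sign p) \<in> S"
  and hom_sign: "h (of_int (sign p)) = of_int (sign p)"
  by (simp_all add: sign_def one_closed uminus_closed hom_one hom_uminus)

definition poly_over :: "'a poly \<Rightarrow> bool" where
  "poly_over f \<longleftrightarrow> (\<forall>k. coeff f k \<in> S)"

lemma poly_over_0 [simp]: "poly_over 0"
  and poly_over_1 [simp]: "poly_over 1"
  by (simp_all add: poly_over_def coeff_1 zero_closed one_closed)

lemma poly_over_const: "c \<in> S \<Longrightarrow> poly_over [:c:]"
  by (simp add: poly_over_def coeff_pCons zero_closed split: nat.split)

lemma poly_over_monom: "c \<in> S \<Longrightarrow> poly_over (monom c n)"
  by (simp add: poly_over_def coeff_monom zero_closed)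

lemma poly_over_add: "poly_over f \<Longrightarrow> poly_over g \<Longrightarrow> poly_over (f + g)"
  and poly_over_diff: "poly_over f \<Longrightarrow> poly_over g \<Longrightarrow> poly_over (f - g)"
  and poly_over_smult: "c \<in> S \<Longrightarrow> poly_over f \<Longrightarrow> poly_over (smult c f)"
  by (simp_all add: poly_over_def add_closed diff_closed mult_closed)

lemma poly_over_mult: "poly_over f \<Longrightarrow> poly_over g \<Longrightarrow> poly_over (f * g)"
  by (simp add: poly_over_def coeff_mult sum_closed mult_closed)

lemma poly_over_power: "poly_over f \<Longrightarrow> poly_over (f ^ k)"
  by (induction k) (simp_all add: poly_over_mult)

lemma coeff_map_poly_hom: "coeff (map_poly h f) k = h (coeff f k)"
  by (simp add: coeff_map_poly hom_zero)

lemma map_poly_hom_add: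
    "poly_over f \<Longrightarrow> poly_over g \<Longrightarrow> map_poly h (f + g) = map_poly h f + map_poly h g"
  and map_poly_hom_diff:
    "poly_over f \<Longrightarrow> poly_over g \<Longrightarrow> map_poly h (f - g) = map_poly h f - map_poly h g"
  and map_poly_hom_smult:
    "c \<in> S \<Longrightarrow> poly_over f \<Longrightarrow> map_poly h (smult c f) = smult (h c) (map_poly h f)"
  by (simp_all add: poly_eq_iff coeff_map_poly_hom hom_add hom_diff hom_mult poly_over_def)

lemma map_poly_hom_monom: "map_poly h (monom c n) = monom (h c) n"
  by (simp add: poly_eq_iff coeff_map_poly_hom coeff_monom hom_zero)

lemma map_poly_hom_const: "map_poly h [:c:] = [:h c:]"
  by (simp add: poly_eq_iff coeff_map_poly_hom coeff_pCons hom_zero split: nat.split)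

lemma map_poly_hom_1: "map_poly h 1 = 1"
  using map_poly_hom_const[of 1] by (simp add: hom_one one_pCons)

lemma map_poly_hom_mult:
  assumes "poly_over f" "poly_over g"
  shows "map_poly h (f * g) = map_poly h f * map_poly h g"
proof (rule poly_eqI)
  fix n
  have "\<And>i. coeff f i * coeff g (n - i) \<in> S"
    using assms mult_closed by (simp add: poly_over_def)
  then show "coeff (map_poly h (f * g)) n = coeff (map_poly h f * map_poly h g) n"
    using assms by (simp add: coeff_map_poly_hom coeff_mult hom_sum hom_mult poly_over_def)
qed

lemma map_poly_hom_power: "poly_over f \<Longrightarrow> map_poly h (f ^ k) = map_poly h f ^ k"
  by (induction k) (simp_all add: map_poly_hom_1 map_poly_hom_mult poly_over_power)

lemma degree_map_poly_hom_monic: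
  assumes "lead_coeff P = 1" shows "degree (map_poly h P) = degree P"
proof -
  have "coeff (map_poly h P) (degree P) = 1" using assms by (simp add: coeff_map_poly_hom hom_one)
  then have "degree P \<le> degree (map_poly h P)" by (simp add: le_degree)
  then show ?thesis using map_poly_degree_leq[of h P] by simp
qed

text \<open>Division by a monic polynomial needs no inverses of coefficients, so it commutes with
  the partial homomorphism: each step of long division subtracts a monomial multiple of P.\<close>

lemma map_poly_hom_mod:
  assumes P: "poly_over P" "lead_coeff P = 1" and f: "poly_over f"
  shows "poly_over (f mod P) \<and> map_poly h (f mod P) = map_poly h f mod map_poly h P"
  using f
proof (induction "degree f" arbitrary: f rule: less_induct)
  case less
  have hP: "degree (map_poly h P) = degree P" using degree_map_poly_hom_monic P by blast
  show ?case
  proof (cases "degree f < degree P")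
    case True
    then have "degree (map_poly h f) < degree (map_poly h P)"
      using hP map_poly_degree_leq[of h f] by linarith
    then show ?thesis using True less.prems by (simp add: mod_poly_less)
  next
    case False
    define q where "q = monom (lead_coeff f) (degree f - degree P)"
    have "lead_coeff f \<in> S" using less.prems by (simp add: poly_over_def)
    then have q: "poly_over q" "map_poly h q = monom (h (lead_coeff f)) (degree f - degree P)"
      by (simp_all add: q_def poly_over_monom map_poly_hom_monom)
    have over: "poly_over (f - q * P)"
      using less.prems P q by (simp add: poly_over_diff poly_over_mult)
    have mod_eq: "f mod P = (f - q * P) mod P"
      by (metis diff_add_cancel mod_mult_self1)
    have "map_poly h (f - q * P) = map_poly h f - map_poly h q * map_poly h P"
      using less.prems P q by (simp add: map_poly_hom_diff map_poly_hom_mult poly_over_mult)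
    then have map_mod_eq: "map_poly h f mod map_poly h P = map_poly h (f - q * P) mod map_poly h P"
      by (metis diff_add_cancel mod_mult_self1)
    show ?thesis
    proof (cases "f - q * P = 0")
      case True
      then show ?thesis using mod_eq map_mod_eq by simp
    next
      case nz: False
      have "coeff (f - q * P) k = 0" if "k \<ge> degree f" for k
        using that False P(2)
        by (cases "k = degree f") (auto simp: q_def coeff_monom_mult coeff_eq_0)
      then have "degree (f - q * P) < degree f"
        using nz by (meson leading_coeff_neq_0 not_le)
      from less.hyps[OF this over] show ?thesis using mod_eq map_mod_eq by simp
    qed
  qed
qed

lemma hom_det:
  assumes M: "M \<in> carrier_mat n n" and entries: "\<And>i j. i < n \<Longrightarrow> j < n \<Longrightarrow> M $$ (i, j) \<in> S"
  shows "det M \<in> S \<and> h (det M) = det (map_mat h M)"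
proof -
  let ?P = "{p. p permutes {0..<n}}"
  define t where "t p = of_int (sign p) * (\<Prod>i = 0..<n. M $$ (i, p i))" for p
  have entry: "M $$ (i, p i) \<in> S" "map_mat h M $$ (i, p i) = h (M $$ (i, p i))"
    if "p \<in> ?P" "i \<in> {0..<n}" for p i
    using that M entries permutes_in_image by fastforce+
  have t: "t p \<in> S" "h (t p) = of_int (sign p) * (\<Prod>i = 0..<n. map_mat h M $$ (i, p i))"
    if "p \<in> ?P" for p
  proof -
    have "(\<Prod>i = 0..<n. M $$ (i, p i)) \<in> S" using entry(1) that by (intro prod_closed)
    moreover have "h (\<Prod>i = 0..<n. M $$ (i, p i)) = (\<Prod>i = 0..<n. h (M $$ (i, p i)))"
      using entry(1) that by (intro hom_prod)
    ultimately show "t p \<in> S" "h (t p) = of_int (sign p) * (\<Prod>i = 0..<n. map_mat h M $$ (i, p i))"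
      using entry that by (simp_all add: t_def mult_closed sign_closed hom_mult hom_sign hom_prod)
  qed
  have "det M = sum t ?P" using det_def'[OF M] by (simp add: t_def)
  moreover have "det (map_mat h M) = (\<Sum>p\<in>?P. h (t p))"
    using det_def'[of "map_mat h M" n] M t by simp
  moreover have "sum t ?P \<in> S" "h (sum t ?P) = (\<Sum>p\<in>?P. h (t p))"
    using t(1) sum_closed[of ?P t] hom_sum[of ?P t] by auto
  ultimately show ?thesis by simp
qed

lemma hom_alg_norm:
  assumes P: "poly_over P" "lead_coeff P = 1" and f: "poly_over f"
  shows "alg_norm P f \<in> S \<and> h (alg_norm P f) = alg_norm (map_poly h P) (map_poly h f)"
proof -
  have entry: "coeff ((monom 1 j * f) mod P) i \<in> S \<and>
      h (coeff ((monom 1 j * f) mod P) i) = coeff ((monom 1 j * map_poly h f) mod map_poly h P) i"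
    for i j
  proof -
    have "map_poly h (monom 1 j * f) = monom 1 j * map_poly h f"
      using f by (simp add: map_poly_hom_mult poly_over_monom one_closed map_poly_hom_monom hom_one)
    then show ?thesis
      using map_poly_hom_mod[OF P poly_over_mult[OF poly_over_monom[OF one_closed] f]]
      by (metis poly_over_def coeff_map_poly_hom)
  qed
  have "map_mat h (mult_matrix P f) = mult_matrix (map_poly h P) (map_poly h f)"
    by (rule eq_matI) (auto simp: mult_matrix_def degree_map_poly_hom_monic[OF P(2)] entry)
  then show ?thesis
    using hom_det[of "mult_matrix P f" "degree P"] entry
    by (simp add: alg_norm_def mult_matrix_def)
qed

end

section \<open>Norms\<close>

lemma degree_mod_less_pos: "0 < degree p \<Longrightarrow> degree (x mod p) < degree (p :: 'a::field poly)"
  using degree_mod_less[of p x] by (cases "p = 0") auto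

lemma coeff_mod_eq_0: "p \<noteq> 0 \<Longrightarrow> degree p \<le> k \<Longrightarrow> coeff (x mod p) k = (0 :: 'a::field)"
  using degree_mod_less[of p x] by (auto intro: coeff_eq_0)

lemma poly_eq_sum_monom_lessThan:
  assumes "\<forall>k\<ge>n. coeff c k = 0"
  shows "c = (\<Sum>l<n. monom (coeff c l) l)"
proof (rule poly_eqI)
  fix k
  have "coeff (\<Sum>l<n. monom (coeff c l) l) k = (if k < n then coeff c k else 0)"
    by (simp add: coeff_sum coeff_monom sum.delta)
  then show "coeff c k = coeff (\<Sum>l<n. monom (coeff c l) l) k" using assms by auto
qed

lemma poly_mod_sum: "(\<Sum>l\<in>A. f l) mod p = (\<Sum>l\<in>A. f l mod (p :: 'a::field poly))"
  by (induction A rule: infinite_finite_induct) (simp_all add: poly_mod_add_left)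

lemma coeff_mult_mod_eq_sum:
  fixes p a c :: "'a::field poly"
  assumes c: "\<forall>k\<ge>degree p. coeff c k = 0"
  shows "coeff ((a * c) mod p) i = (\<Sum>l<degree p. coeff ((monom 1 l * a) mod p) i * coeff c l)"
proof -
  have "a * monom (coeff c l) l = smult (coeff c l) (monom 1 l * a)" for l
  proof -
    have "monom (coeff c l) l = smult (coeff c l) (monom 1 l)" by (simp add: smult_monom)
    then show ?thesis by (simp add: mult.commute)
  qed
  then have "a * c = (\<Sum>l<degree p. smult (coeff c l) (monom 1 l * a))"
    by (subst poly_eq_sum_monom_lessThan[OF c]) (simp add: sum_distrib_left)
  then have "(a * c) mod p = (\<Sum>l<degree p. smult (coeff c l) ((monom 1 l * a) mod p))"
    by (simp add: poly_mod_sum mod_smult_left)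
  then show ?thesis by (simp add: coeff_sum mult.commute)
qed

lemma mult_matrix_carrier: "mult_matrix p a \<in> carrier_mat (degree p) (degree p)"
  by (simp add: mult_matrix_def)

lemma mult_matrix_mult:
  fixes p a b :: "'a::field poly"
  assumes p: "p \<noteq> 0"
  shows "mult_matrix p (a * b) = mult_matrix p a * mult_matrix p b"
proof (rule eq_matI)
  fix i j assume "i < dim_row (mult_matrix p a * mult_matrix p b)"
    and "j < dim_col (mult_matrix p a * mult_matrix p b)"
  then have ij: "i < degree p" "j < degree p" by (auto simp: mult_matrix_def)
  define c where "c = (monom 1 j * b) mod p"
  have c: "\<forall>k\<ge>degree p. coeff c k = 0" unfolding c_def using coeff_mod_eq_0[OF p] by blast
  have "(monom 1 j * (a * b)) mod p = (a * c) mod p"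
    unfolding c_def by (metis mod_mult_right_eq mult.left_commute)
  then show "mult_matrix p (a * b) $$ (i, j) = (mult_matrix p a * mult_matrix p b) $$ (i, j)"
    using coeff_mult_mod_eq_sum[OF c, of a i] ij
    by (simp add: mult_matrix_def scalar_prod_def c_def lessThan_atLeast0)
qed (auto simp: mult_matrix_def)

lemma alg_norm_mult:
  "p \<noteq> 0 \<Longrightarrow> alg_norm p (a * b) = alg_norm p a * alg_norm p (b :: 'a::field poly)"
  unfolding alg_norm_def mult_matrix_mult
  by (rule det_mult[OF mult_matrix_carrier mult_matrix_carrier])

lemma alg_norm_mod: "alg_norm p (a mod p) = alg_norm p (a :: 'a::field poly)"
  by (simp add: alg_norm_def mult_matrix_def mod_mult_right_eq)

lemma alg_norm_1: "alg_norm p (1 :: 'a::field poly) = 1"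
proof -
  have "mult_matrix p 1 = 1\<^sub>m (degree p)"
  proof (rule eq_matI)
    fix i j assume "i < dim_row (1\<^sub>m (degree p))" "j < dim_col (1\<^sub>m (degree p))"
    then have ij: "i < degree p" "j < degree p" by auto
    then have "monom 1 j mod p = (monom (1::'a) j)"
      by (intro mod_poly_less) (simp add: degree_monom_eq)
    then show "mult_matrix p 1 $$ (i, j) = 1\<^sub>m (degree p) $$ (i, j)"
      using ij by (simp add: mult_matrix_def coeff_monom)
  qed (auto simp: mult_matrix_def)
  then show ?thesis by (simp add: alg_norm_def)
qed

lemma alg_norm_smult: "alg_norm p (smult c a) = c ^ degree p * alg_norm p (a :: 'a::field poly)"
proof -
  have "mult_matrix p (smult c a) = c \<cdot>\<^sub>m mult_matrix p a"
    by (rule eq_matI) (auto simp: mult_matrix_def mod_smult_left)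
  then show ?thesis by (simp add: alg_norm_def det_smult mult_matrix_def)
qed

lemma alg_norm_power: "p \<noteq> 0 \<Longrightarrow> alg_norm p (a ^ k) = alg_norm p (a :: 'a::field poly) ^ k"
  by (induction k) (simp_all add: alg_norm_1 alg_norm_mult)

text \<open>An inverse of a modulo p is read off from the adjugate of its multiplication matrix.\<close>

lemma inverse_mod_exists:
  fixes p a :: "'a::field poly"
  assumes p: "0 < degree p" and norm: "alg_norm p a \<noteq> 0"
  obtains b where "degree b < degree p" "(a * b) mod p = 1"
proof -
  let ?n = "degree p" and ?A = "mult_matrix p a"
  have A: "?A \<in> carrier_mat ?n ?n" by (rule mult_matrix_carrier)
  define B where "B = inverse (det ?A) \<cdot>\<^sub>m adj_mat ?A"
  have adj: "?A * adj_mat ?A = det ?A \<cdot>\<^sub>m 1\<^sub>m ?n" "adj_mat ?A \<in> carrier_mat ?n ?n"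
    using adj_mat[OF A] by auto
  have "?A * B = inverse (det ?A) \<cdot>\<^sub>m (?A * adj_mat ?A)"
    unfolding B_def using mult_smult_distrib[OF A adj(2)] by simp
  also have "\<dots> = 1\<^sub>m ?n"
    unfolding adj(1) using norm by (intro eq_matI) (auto simp: alg_norm_def)
  finally have AB: "?A * B = 1\<^sub>m ?n" .
  define b where "b = (\<Sum>l<?n. monom (B $$ (l, 0)) l)"
  have coeff_b: "coeff b l = (if l < ?n then B $$ (l, 0) else 0)" for l
    by (simp add: b_def coeff_sum coeff_monom sum.delta)
  have "degree b \<le> ?n - 1" by (rule degree_le) (use p in \<open>auto simp: coeff_b\<close>)
  then have "degree b < ?n" using p by linarith
  moreover have "(a * b) mod p = 1"
  proof (rule poly_eqI)
    fix i
    show "coeff ((a * b) mod p) i = coeff 1 i"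
    proof (cases "i < ?n")
      case True
      have "coeff ((a * b) mod p) i = (\<Sum>l<?n. ?A $$ (i, l) * B $$ (l, 0))"
        using coeff_mult_mod_eq_sum[of p b a i] coeff_b True by (simp add: mult_matrix_def)
      also have "\<dots> = (?A * B) $$ (i, 0)"
        using True p A B_def adj by (simp add: scalar_prod_def lessThan_atLeast0)
      finally show ?thesis using AB True p by (simp add: coeff_1)
    next
      case False
      have "p \<noteq> 0" using p by auto
      then show ?thesis using False p coeff_mod_eq_0[of p i "a * b"] by (auto simp: coeff_1)
    qed
  qed
  ultimately show ?thesis by (rule that)
qed

section \<open>The torus group\<close>

definition torus_mult :: "'a::field poly list \<Rightarrow> 'a poly list \<Rightarrow> 'a poly list \<Rightarrow> 'a poly list" where
  "torus_mult ps x y = map (\<lambda>j. (x!j * y!j) mod (ps!j)) [0..<length ps]"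

lemma torus_group_simps [simp]:
  "carrier (torus_group ps) = torus_points ps"
  "\<one>\<^bsub>torus_group ps\<^esub> = replicate (length ps) 1"
  "x \<otimes>\<^bsub>torus_group ps\<^esub> y = torus_mult ps x y"
  by (simp_all add: torus_group_def torus_mult_def)

lemma length_torus_mult [simp]: "length (torus_mult ps x y) = length ps"
  and nth_torus_mult [simp]: "j < length ps \<Longrightarrow> torus_mult ps x y ! j = (x!j * y!j) mod (ps!j)"
  by (simp_all add: torus_mult_def)

lemma torus_mult_Cons [simp]:
  "torus_mult (p # ps) (x # xs) (y # ys) = ((x * y) mod p) # torus_mult ps xs ys"
  by (simp add: torus_mult_def map_upt_Suc del: upt_Suc)

lemma length_torus_point: "x \<in> torus_points ps \<Longrightarrow> length x = length ps"
  by (simp add: torus_points_def)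

lemma Cons_torus_points_iff:
  "x # xs \<in> torus_points (p # ps) \<longleftrightarrow>
     degree x < degree p \<and> length xs = length ps \<and> (\<forall>j<length ps. degree (xs!j) < degree (ps!j)) \<and>
     alg_norm p x * (\<Prod>j<length ps. alg_norm (ps!j) (xs!j)) = 1"
  unfolding torus_points_def mem_Collect_eq prod.lessThan_Suc_shift length_Cons
  by (simp add: All_less_Suc2) blast

lemma alg_norm_torus_point_nonzero:
  assumes "x \<in> torus_points ps" "j < length ps"
  shows "alg_norm (ps!j) (x!j) \<noteq> 0"
proof
  assume "alg_norm (ps!j) (x!j) = 0"
  then have "(\<Prod>j<length ps. alg_norm (ps!j) (x!j)) = 0"
    using assms(2) by (metis finite_lessThan lessThan_iff prod_zero)
  moreover have "(\<Prod>j<length ps. alg_norm (ps!j) (x!j)) = 1"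
    using assms(1) by (simp add: torus_points_def)
  ultimately show False by simp
qed

lemma torus_mult_closed:
  assumes ps: "\<forall>p\<in>set ps. 0 < degree p"
    and x: "x \<in> torus_points ps" and y: "y \<in> torus_points ps"
  shows "torus_mult ps x y \<in> torus_points ps"
proof -
  have "alg_norm (ps!j) ((x!j * y!j) mod (ps!j)) = alg_norm (ps!j) (x!j) * alg_norm (ps!j) (y!j)"
    if "j < length ps" for j
  proof -
    have "ps!j \<noteq> 0" using ps nth_mem[OF that] by fastforce
    then show ?thesis by (simp add: alg_norm_mod alg_norm_mult)
  qed
  then show ?thesis
    using ps x y by (simp add: torus_points_def degree_mod_less_pos prod.distrib)
qed

lemma torus_one_mem:
  "\<forall>p\<in>set ps. 0 < degree p \<Longrightarrow> replicate (length ps) 1 \<in> torus_points ps"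
  by (auto simp: torus_points_def alg_norm_1)

lemma torus_mult_one_left:
  "x \<in> torus_points ps \<Longrightarrow> torus_mult ps (replicate (length ps) 1) x = x"
  by (intro nth_equalityI) (auto simp: torus_points_def mod_poly_less)

lemma torus_inverse_exists:
  assumes ps: "\<forall>p\<in>set ps. 0 < degree p" and x: "x \<in> torus_points ps"
  obtains y where "y \<in> torus_points ps" "torus_mult ps y x = replicate (length ps) 1"
proof -
  have "\<exists>b. degree b < degree (ps!j) \<and> (x!j * b) mod (ps!j) = 1" if "j < length ps" for j
    using inverse_mod_exists[of "ps!j" "x!j"] that ps alg_norm_torus_point_nonzero[OF x that]
    by auto
  then obtain B where B: "degree (B j) < degree (ps!j)" "(x!j * B j) mod (ps!j) = 1"
    if "j < length ps" for j
    by metis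
  define y where "y = map B [0..<length ps]"
  have "alg_norm (ps!j) (y!j) * alg_norm (ps!j) (x!j) = 1" if j: "j < length ps" for j
  proof -
    have "ps!j \<noteq> 0" using ps nth_mem[OF j] by fastforce
    then show ?thesis
      using alg_norm_mult[of "ps!j" "x!j" "B j"] alg_norm_mod[of "ps!j" "x!j * B j"] B[OF j] j
      by (simp add: y_def alg_norm_1 mult.commute)
  qed
  then have "(\<Prod>j<length ps. alg_norm (ps!j) (y!j)) * (\<Prod>j<length ps. alg_norm (ps!j) (x!j)) = 1"
    by (simp add: prod.distrib[symmetric])
  then have "(\<Prod>j<length ps. alg_norm (ps!j) (y!j)) = 1"
    using x by (simp add: torus_points_def)
  then have "y \<in> torus_points ps" using B by (simp add: torus_points_def y_def)
  moreover have "torus_mult ps y x = replicate (length ps) 1"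
    using B by (auto intro!: nth_equalityI simp: y_def mult.commute)
  ultimately show ?thesis by (rule that)
qed

lemma torus_comm_group:
  assumes ps: "\<forall>p\<in>set ps. 0 < degree p"
  shows "comm_group (torus_group ps)"
proof (rule comm_groupI)
  show "x \<otimes>\<^bsub>torus_group ps\<^esub> y \<in> carrier (torus_group ps)"
    if "x \<in> carrier (torus_group ps)" "y \<in> carrier (torus_group ps)" for x y
    using that torus_mult_closed[OF ps] by simp
  show "\<one>\<^bsub>torus_group ps\<^esub> \<in> carrier (torus_group ps)" using torus_one_mem[OF ps] by simp
  show "x \<otimes>\<^bsub>torus_group ps\<^esub> y \<otimes>\<^bsub>torus_group ps\<^esub> z =
      x \<otimes>\<^bsub>torus_group ps\<^esub> (y \<otimes>\<^bsub>torus_group ps\<^esub> z)" for x y z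
    by (auto intro!: nth_equalityI simp: mod_mult_left_eq mod_mult_right_eq mult.assoc)
  show "x \<otimes>\<^bsub>torus_group ps\<^esub> y = y \<otimes>\<^bsub>torus_group ps\<^esub> x" for x y
    by (simp add: torus_mult_def mult.commute)
  show "\<one>\<^bsub>torus_group ps\<^esub> \<otimes>\<^bsub>torus_group ps\<^esub> x = x" if "x \<in> carrier (torus_group ps)" for x
    using that torus_mult_one_left by simp
  show "\<exists>y\<in>carrier (torus_group ps). y \<otimes>\<^bsub>torus_group ps\<^esub> x = \<one>\<^bsub>torus_group ps\<^esub>"
    if "x \<in> carrier (torus_group ps)" for x
  proof -
    have "x \<in> torus_points ps" using that by simp
    then obtain y where "y \<in> torus_points ps" "torus_mult ps y x = replicate (length ps) 1"
      by (rule torus_inverse_exists[OF ps])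
    then show ?thesis by auto
  qed
qed

section \<open>Specialisation of rational functions\<close>

lemma eval_at_Fract:
  assumes "poly d c \<noteq> 0"
  shows "eval_at c (Fract n d) = poly n c / poly d c"
  unfolding eval_at_def
proof (rule the_equality)
  fix v assume "\<exists>n' d'. poly d' c \<noteq> 0 \<and> Fract n d = Fract n' d' \<and> v = poly n' c / poly d' c"
  then obtain n' d' where d': "poly d' c \<noteq> 0" and eq: "Fract n d = Fract n' d'"
    and v: "v = poly n' c / poly d' c"
    by blast
  have "d \<noteq> 0" "d' \<noteq> 0" using assms d' by auto
  then have "n * d' = n' * d" using eq eq_fract by auto
  then have "poly n c * poly d' c = poly n' c * poly d c" by (metis poly_mult)
  then show "v = poly n c / poly d c" using v assms d' by (simp add: frac_eq_eq)
qed (use assms in blast)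

lemma regular_at_Fract: "poly d c \<noteq> 0 \<Longrightarrow> regular_at c (Fract n d)"
  unfolding regular_at_def by blast

lemma regular_atE:
  assumes "regular_at c q"
  obtains n d where "poly d c \<noteq> 0" "q = Fract n d"
  using assms unfolding regular_at_def by blast

lemma partial_ring_hom_eval_at: "partial_ring_hom {q. regular_at c q} (eval_at c)"
proof
  fix x y assume "x \<in> {q. regular_at c q}" "y \<in> {q. regular_at c q}"
  then obtain n1 d1 n2 d2 where 1: "poly d1 c \<noteq> 0" "x = Fract n1 d1"
    and 2: "poly d2 c \<noteq> 0" "y = Fract n2 d2"
    by (auto elim!: regular_atE)
  have "d1 \<noteq> 0" "d2 \<noteq> 0" using 1 2 by auto
  then have sum: "x + y = Fract (n1 * d2 + n2 * d1) (d1 * d2)"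
    and prod: "x * y = Fract (n1 * n2) (d1 * d2)"
    using 1 2 by (simp_all add: add_fract mult_fract)
  show "x + y \<in> {q. regular_at c q}" "x * y \<in> {q. regular_at c q}"
    using sum prod 1 2 by (simp_all add: regular_at_Fract)
  show "eval_at c (x + y) = eval_at c x + eval_at c y" "eval_at c (x * y) = eval_at c x * eval_at c y"
    using sum prod 1 2 by (simp_all add: eval_at_Fract field_simps)
next
  fix x assume "x \<in> {q. regular_at c q}"
  then show "- x \<in> {q. regular_at c q}" by (auto elim!: regular_atE simp: regular_at_Fract minus_fract)
qed (simp_all add: Zero_fract_def One_fract_def regular_at_Fract eval_at_Fract)

interpretation spec: partial_ring_hom "{q. regular_at c q}" "eval_at c" for c
  by (rule partial_ring_hom_eval_at)

lemma const_ft_Fract: "const_ft a = Fract [:a:] 1"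
  by (simp add: const_ft_def to_fract_def)

lemma regular_at_const_ft [simp]: "regular_at c (const_ft a)"
  by (simp add: const_ft_Fract regular_at_Fract)

lemma eval_at_const_ft [simp]: "eval_at c (const_ft a) = a"
  by (simp add: const_ft_Fract eval_at_Fract)

lemma const_ft_eq_0_iff [simp]: "const_ft x = 0 \<longleftrightarrow> x = 0"
  by (simp add: const_ft_def)

lemma regular_at_inverse:
  assumes "regular_at c q" "eval_at c q \<noteq> 0"
  shows "regular_at c (inverse q)" "eval_at c (inverse q) = inverse (eval_at c q)"
proof -
  obtain n d where nd: "poly d c \<noteq> 0" "q = Fract n d" using assms(1) by (rule regular_atE)
  then have "poly n c \<noteq> 0" using assms(2) by (simp add: eval_at_Fract)
  then show "regular_at c (inverse q)" "eval_at c (inverse q) = inverse (eval_at c q)"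
    using nd by (simp_all add: inverse_fract regular_at_Fract eval_at_Fract)
qed

lemma partial_ring_hom_const_ft: "partial_ring_hom UNIV const_ft"
proof
  fix x y :: 'a
  show "const_ft (x + y) = const_ft x + const_ft y" "const_ft (x * y) = const_ft x * const_ft y"
    unfolding const_ft_def by (simp_all flip: to_fract_add to_fract_mult)
qed (simp_all add: const_ft_def flip: one_pCons)

interpretation emb: partial_ring_hom UNIV const_ft
  by (rule partial_ring_hom_const_ft)

section \<open>R-equivalence via rational curves\<close>

abbreviation lift_polys :: "'a::field poly list \<Rightarrow> 'a poly fract poly list" where
  "lift_polys ps \<equiv> map (map_poly const_ft) ps"

definition monic_nonconst :: "'a::field poly list \<Rightarrow> bool" where
  "monic_nonconst ps \<longleftrightarrow> (\<forall>p\<in>set ps. lead_coeff p = 1 \<and> 0 < degree p)"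

definition specialize :: "'a::field \<Rightarrow> 'a poly fract poly list \<Rightarrow> 'a poly list" where
  "specialize c f = map (map_poly (eval_at c)) f"

definition rational_curve :: "'a::field poly list \<Rightarrow> 'a poly fract poly list \<Rightarrow> bool" where
  "rational_curve ps f \<longleftrightarrow> f \<in> torus_points (lift_polys ps) \<and>
     (\<forall>x\<in>set f. spec.poly_over 0 x \<and> spec.poly_over 1 x)"

lemma monic_nonconst_degree_pos: "monic_nonconst ps \<Longrightarrow> \<forall>p\<in>set ps. 0 < degree p"
  by (simp add: monic_nonconst_def)

lemma degree_lift [simp]: "degree (map_poly const_ft p) = degree p"
  by (simp add: degree_map_poly)

lemma lead_coeff_lift: "lead_coeff p = 1 \<Longrightarrow> lead_coeff (map_poly const_ft p) = 1"
  by (simp add: emb.coeff_map_poly_hom emb.hom_one)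

lemma spec_poly_over_lift [simp]: "spec.poly_over c (map_poly const_ft p)"
  by (simp add: spec.poly_over_def coeff_map_poly)

lemma specialize_lift [simp]: "map_poly (eval_at c) (map_poly const_ft p) = p"
  by (simp add: poly_eq_iff spec.coeff_map_poly_hom coeff_map_poly)

lemma monic_nonconst_lift: "monic_nonconst ps \<Longrightarrow> monic_nonconst (lift_polys ps)"
  by (simp add: monic_nonconst_def emb.coeff_map_poly_hom emb.hom_one)

lemma lift_mem_torus_points:
  assumes "monic_nonconst ps" "y \<in> torus_points ps"
  shows "lift_polys y \<in> torus_points (lift_polys ps)"
proof -
  have "alg_norm (map_poly const_ft (ps!j)) (map_poly const_ft (y!j)) = const_ft (alg_norm (ps!j) (y!j))"
    if "j < length ps" for j
    using emb.hom_alg_norm[of "ps!j" "y!j"] assms(1) nth_mem[OF that]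
    by (simp add: emb.poly_over_def monic_nonconst_def)
  then have "(\<Prod>j<length ps. alg_norm (lift_polys ps ! j) (lift_polys y ! j))
      = const_ft (\<Prod>j<length ps. alg_norm (ps!j) (y!j))"
    using assms(2) by (simp add: emb.hom_prod length_torus_point)
  then show ?thesis using assms(2) by (simp add: torus_points_def emb.hom_one)
qed

lemma spec_alg_norm_lift:
  assumes "lead_coeff p = 1" "spec.poly_over c f"
  shows "regular_at c (alg_norm (map_poly const_ft p) f)"
    and "eval_at c (alg_norm (map_poly const_ft p) f) = alg_norm p (map_poly (eval_at c) f)"
  using spec.hom_alg_norm[OF spec_poly_over_lift lead_coeff_lift[OF assms(1)] assms(2)] by simp_all

lemma specialize_mem_torus_points:
  assumes ps: "monic_nonconst ps" and f: "rational_curve ps f" and c: "c = 0 \<or> c = 1"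
  shows "specialize c f \<in> torus_points ps"
proof -
  have len: "length f = length ps" using f by (simp add: rational_curve_def torus_points_def)
  have over: "spec.poly_over c (f!j)" and lead: "lead_coeff (ps!j) = 1" if "j < length ps" for j
    using f c ps nth_mem[of j f] nth_mem[of j ps] that len
    by (auto simp: rational_curve_def monic_nonconst_def)
  have "degree (specialize c f ! j) < degree (ps!j)" if j: "j < length ps" for j
  proof -
    have "degree (specialize c f ! j) \<le> degree (f!j)"
      using j len by (simp add: specialize_def map_poly_degree_leq)
    also have "degree (f!j) < degree (ps!j)"
      using f j by (simp add: rational_curve_def torus_points_def)
    finally show ?thesis .
  qed
  moreover have "eval_at c (\<Prod>j<length ps. alg_norm (lift_polys ps ! j) (f!j))
      = (\<Prod>j<length ps. eval_at c (alg_norm (lift_polys ps ! j) (f!j)))"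
    using spec_alg_norm_lift(1)[OF lead over] by (intro spec.hom_prod) simp
  moreover have "\<dots> = (\<Prod>j<length ps. alg_norm (ps!j) (specialize c f ! j))"
    using spec_alg_norm_lift(2)[OF lead over] len by (simp add: specialize_def)
  moreover have "(\<Prod>j<length ps. alg_norm (lift_polys ps ! j) (f!j)) = 1"
    using f by (simp add: rational_curve_def torus_points_def)
  ultimately show ?thesis using len by (simp add: torus_points_def specialize_def spec.hom_one)
qed

lemma R_link_iff_rational_curve:
  assumes "monic_nonconst ps"
  shows "R_link ps x0 x1 \<longleftrightarrow> (\<exists>f. rational_curve ps f \<and> specialize 0 f = x0 \<and> specialize 1 f = x1)"
  using specialize_mem_torus_points[OF assms]
  unfolding R_link_def rational_curve_def specialize_def spec.poly_over_def all_set_conv_all_nth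
  by auto

lemma spec_mod_lift:
  assumes "lead_coeff p = 1" "spec.poly_over c a"
  shows "spec.poly_over c (a mod map_poly const_ft p)"
    and "map_poly (eval_at c) (a mod map_poly const_ft p) = map_poly (eval_at c) a mod p"
  using spec.map_poly_hom_mod[OF spec_poly_over_lift lead_coeff_lift[OF assms(1)] assms(2)] by simp_all

lemma equivclp_image:
  assumes "\<And>a b. R a b \<Longrightarrow> R' (g a) (g b)" and "equivclp R x y"
  shows "equivclp R' (g x) (g y)"
  using assms(2)
proof (induction rule: equivclp_induct)
  case (step y z)
  then show ?case using assms(1) equivclp_into_equivclp by metis
qed simp

lemma R_link_mult_right:
  assumes ps: "monic_nonconst ps" and link: "R_link ps x0 x1" and y: "y \<in> torus_points ps"
  shows "R_link ps (torus_mult ps x0 y) (torus_mult ps x1 y)"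
proof -
  obtain f where f: "rational_curve ps f" and x0: "specialize 0 f = x0" and x1: "specialize 1 f = x1"
    using link R_link_iff_rational_curve[OF ps] by blast
  have len: "length f = length ps" using f by (simp add: rational_curve_def torus_points_def)
  define f' where "f' = torus_mult (lift_polys ps) f (lift_polys y)"
  have "f' \<in> torus_points (lift_polys ps)"
    unfolding f'_def using f lift_mem_torus_points[OF ps y]
    by (intro torus_mult_closed monic_nonconst_degree_pos monic_nonconst_lift ps)
      (simp_all add: rational_curve_def)
  moreover have "spec.poly_over c (f'!j)"
    and "map_poly (eval_at c) (f'!j) = (specialize c f ! j * y!j) mod (ps!j)"
    if "j < length ps" "c = 0 \<or> c = 1" for j c
  proof -
    have lead: "lead_coeff (ps!j) = 1" using ps nth_mem[OF that(1)] by (simp add: monic_nonconst_def)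
    have "spec.poly_over c (f!j)"
      using f that len nth_mem[of j f] by (auto simp: rational_curve_def)
    then have over: "spec.poly_over c (f!j * map_poly const_ft (y!j))"
      and spec: "map_poly (eval_at c) (f!j * map_poly const_ft (y!j)) = specialize c f ! j * y!j"
      using that len by (simp_all add: specialize_def spec.poly_over_mult spec.map_poly_hom_mult)
    show "spec.poly_over c (f'!j)"
      and "map_poly (eval_at c) (f'!j) = (specialize c f ! j * y!j) mod (ps!j)"
      using spec_mod_lift[OF lead over] spec that y by (simp_all add: f'_def length_torus_point)
  qed
  ultimately have "rational_curve ps f'"
    and "specialize c f' = torus_mult ps (specialize c f) y" if "c = 0 \<or> c = 1" for c
    using that by (auto intro!: nth_equalityI simp: rational_curve_def all_set_conv_all_nth f'_def
        specialize_def)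
  then show ?thesis using x0 x1 R_link_iff_rational_curve[OF ps] by blast
qed

lemma R_equiv_mult_right:
  assumes "monic_nonconst ps" "R_equiv ps x0 x1" "y \<in> torus_points ps"
  shows "R_equiv ps (torus_mult ps x0 y) (torus_mult ps x1 y)"
  using equivclp_image[of "R_link ps" "R_link ps" "\<lambda>x. torus_mult ps x y"] assms R_link_mult_right
  unfolding R_equiv_def by blast

lemma R_trivial_subgroup:
  assumes ps: "monic_nonconst ps"
  shows "subgroup (R_trivial ps) (torus_group ps)"
proof -
  interpret G: comm_group "torus_group ps"
    using torus_comm_group[OF monic_nonconst_degree_pos[OF ps]] .
  let ?one = "replicate (length ps) 1"
  show ?thesis
  proof (rule G.subgroupI)
    show "R_trivial ps \<subseteq> carrier (torus_group ps)" by (auto simp: R_trivial_def)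
    show "R_trivial ps \<noteq> {}"
      using torus_one_mem[OF monic_nonconst_degree_pos[OF ps]] by (auto simp: R_trivial_def R_equiv_def)
  next
    fix a assume a: "a \<in> R_trivial ps"
    then have a': "a \<in> carrier (torus_group ps)" by (simp add: R_trivial_def)
    let ?b = "inv\<^bsub>torus_group ps\<^esub> a"
    have "R_equiv ps (torus_mult ps a ?b) (torus_mult ps ?one ?b)"
      using R_equiv_mult_right[OF ps] a G.inv_closed[OF a'] by (simp add: R_trivial_def)
    then have "R_equiv ps ?b ?one"
      using G.r_inv[OF a'] G.l_one[OF G.inv_closed[OF a']] by (simp add: R_equiv_def equivclp_sym)
    then show "?b \<in> R_trivial ps" using G.inv_closed[OF a'] by (simp add: R_trivial_def)
  next
    fix a b assume a: "a \<in> R_trivial ps" and b: "b \<in> R_trivial ps"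
    then have "R_equiv ps (torus_mult ps a b) (torus_mult ps ?one b)"
      using R_equiv_mult_right[OF ps] by (simp add: R_trivial_def)
    then have "R_equiv ps (torus_mult ps a b) ?one"
      using b torus_mult_one_left[of b ps] equivclp_trans
      by (fastforce simp: R_trivial_def R_equiv_def)
    then show "a \<otimes>\<^bsub>torus_group ps\<^esub> b \<in> R_trivial ps"
      using a b G.m_closed by (simp add: R_trivial_def)
  qed
qed

lemma R_trivial_normal: "monic_nonconst ps \<Longrightarrow> R_trivial ps \<lhd> torus_group ps"
  using comm_group.subgroup_imp_normal[OF torus_comm_group R_trivial_subgroup]
    monic_nonconst_degree_pos by blast

lemma group_torus_mod_R: "monic_nonconst ps \<Longrightarrow> group (torus_mod_R ps)"
  unfolding torus_mod_R_def by (rule normal.factorgroup_is_group[OF R_trivial_normal])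

lemma FactGroup_iso_preimage:
  assumes G: "group G" and N: "N \<lhd> H" and hom: "\<phi> \<in> hom G H" and surj: "\<phi> ` carrier G = carrier H"
  shows "G Mod {x \<in> carrier G. \<phi> x \<in> N} \<cong> H Mod N"
proof -
  interpret N: normal N H by (rule N)
  let ?\<pi> = "\<lambda>x. N #>\<^bsub>H\<^esub> \<phi> x"
  have "?\<pi> \<in> hom G (H Mod N)" using hom_compose[OF hom N.r_coset_hom_Mod] by (simp add: comp_def)
  then interpret \<pi>: group_hom G "H Mod N" ?\<pi>
    using G N.factorgroup_is_group by (simp add: group_hom_def group_hom_axioms_def)
  have "carrier (H Mod N) = (\<lambda>y. N #>\<^bsub>H\<^esub> y) ` carrier H"
    by (auto simp: FactGroup_def RCOSETS_def)
  then have "?\<pi> ` carrier G = carrier (H Mod N)"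
    using image_image[of "\<lambda>y. N #>\<^bsub>H\<^esub> y" \<phi> "carrier G"] surj by simp
  moreover have "?\<pi> x = \<one>\<^bsub>H Mod N\<^esub> \<longleftrightarrow> \<phi> x \<in> N" if "x \<in> carrier G" for x
  proof -
    have "\<phi> x \<in> carrier H" using hom that by (rule hom_in_carrier)
    then show ?thesis
      using N.coset_join1[of N "\<phi> x"] N.rcos_const[OF N.is_group, of "\<phi> x"] N.subgroup_axioms
      by (auto simp: FactGroup_def)
  qed
  then have "kernel G (H Mod N) ?\<pi> = {x \<in> carrier G. \<phi> x \<in> N}"
    by (auto simp: kernel_def)
  ultimately show ?thesis using \<pi>.FactGroup_iso by simp
qed

text \<open>The kernel of the induced map is the R-trivial subgroup: psi carries R-equivalence back,
  and psi (phi x) is R-equivalent to x.\<close>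

lemma torus_mod_R_iso:
  assumes ps: "monic_nonconst ps" and qs: "monic_nonconst qs"
    and hom: "\<phi> \<in> hom (torus_group ps) (torus_group qs)"
    and surj: "\<phi> ` torus_points ps = torus_points qs"
    and \<phi>_link: "\<And>a b. R_link ps a b \<Longrightarrow> R_link qs (\<phi> a) (\<phi> b)"
    and \<psi>_link: "\<And>a b. R_link qs a b \<Longrightarrow> R_link ps (\<psi> a) (\<psi> b)"
    and \<psi>_one: "\<psi> (replicate (length qs) 1) = replicate (length ps) 1"
    and \<psi>\<phi>: "\<And>x. x \<in> torus_points ps \<Longrightarrow> R_equiv ps x (\<psi> (\<phi> x))"
  shows "torus_mod_R ps \<cong> torus_mod_R qs"
proof -
  have groups: "group (torus_group ps)" "group (torus_group qs)"
    using torus_comm_group monic_nonconst_degree_pos ps qs comm_group.axioms(2) by blast+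
  then interpret group_hom "torus_group ps" "torus_group qs" \<phi>
    using hom by (simp add: group_hom_def group_hom_axioms_def)
  have \<phi>_equiv: "R_equiv qs (\<phi> a) (\<phi> b)" if "R_equiv ps a b" for a b
    using equivclp_image[of "R_link ps" "R_link qs" \<phi>] \<phi>_link that by (simp add: R_equiv_def)
  have \<psi>_equiv: "R_equiv ps (\<psi> a) (\<psi> b)" if "R_equiv qs a b" for a b
    using equivclp_image[of "R_link qs" "R_link ps" \<psi>] \<psi>_link that by (simp add: R_equiv_def)
  have one: "\<phi> (replicate (length ps) 1) = replicate (length qs) 1"
    using hom_one by simp
  have "R_trivial ps = {x \<in> carrier (torus_group ps). \<phi> x \<in> R_trivial qs}"
  proof (intro equalityI subsetI)
    fix x assume "x \<in> R_trivial ps"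
    then have x: "x \<in> torus_points ps" "R_equiv ps x (replicate (length ps) 1)"
      by (simp_all add: R_trivial_def)
    have "\<phi> x \<in> torus_points qs" using hom_closed x(1) by simp
    moreover have "R_equiv qs (\<phi> x) (replicate (length qs) 1)" using \<phi>_equiv[OF x(2)] one by simp
    ultimately show "x \<in> {x \<in> carrier (torus_group ps). \<phi> x \<in> R_trivial qs}"
      using x(1) by (simp add: R_trivial_def)
  next
    fix x assume "x \<in> {x \<in> carrier (torus_group ps). \<phi> x \<in> R_trivial qs}"
    then have x: "x \<in> torus_points ps" "R_equiv qs (\<phi> x) (replicate (length qs) 1)"
      by (simp_all add: R_trivial_def)
    have "R_equiv ps (\<psi> (\<phi> x)) (replicate (length ps) 1)" using \<psi>_equiv[OF x(2)] \<psi>_one by simp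
    with \<psi>\<phi>[OF x(1)] have "R_equiv ps x (replicate (length ps) 1)"
      unfolding R_equiv_def by (rule equivclp_trans)
    then show "x \<in> R_trivial ps" using x(1) by (simp add: R_trivial_def)
  qed
  then show ?thesis
    unfolding torus_mod_R_def
    using FactGroup_iso_preimage[OF groups(1) R_trivial_normal[OF qs] hom] surj by simp
qed

section \<open>Permuting the factors\<close>

lemma permute_list_inv_cancel:
  assumes "\<sigma> permutes {..<length xs}"
  shows "permute_list (inv_into UNIV \<sigma>) (permute_list \<sigma> xs) = xs"
proof -
  have "inv_into UNIV \<sigma> permutes {..<length xs}" using assms by (rule permutes_inv)
  then have "permute_list (\<sigma> \<circ> inv_into UNIV \<sigma>) xs = permute_list (inv_into UNIV \<sigma>) (permute_list \<sigma> xs)"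
    by (rule permute_list_compose)
  then show ?thesis using permutes_inv_o(1)[OF assms] by simp
qed

lemma permute_list_replicate:
  assumes "\<sigma> permutes {..<n}" shows "permute_list \<sigma> (replicate n x) = replicate n x"
proof (rule nth_equalityI)
  fix i assume "i < length (permute_list \<sigma> (replicate n x))"
  then have "i < n" "\<sigma> i < n" using permutes_in_image[OF assms, of i] by simp_all
  then show "permute_list \<sigma> (replicate n x) ! i = replicate n x ! i" by (simp add: permute_list_def)
qed simp

lemma monic_nonconst_permute:
  "\<sigma> permutes {..<length ps} \<Longrightarrow> monic_nonconst ps \<Longrightarrow> monic_nonconst (permute_list \<sigma> ps)"
  by (simp add: monic_nonconst_def)

lemma torus_points_permute:
  assumes \<sigma>: "\<sigma> permutes {..<length ps}" and x: "x \<in> torus_points ps"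
  shows "permute_list \<sigma> x \<in> torus_points (permute_list \<sigma> ps)"
proof -
  have len: "length x = length ps" using x by (rule length_torus_point)
  have nth: "permute_list \<sigma> ps ! j = ps ! \<sigma> j" "permute_list \<sigma> x ! j = x ! \<sigma> j"
    and img: "\<sigma> j < length ps"
    if "j < length ps" for j
    using that \<sigma> len permutes_in_image[OF \<sigma>, of j] by (simp_all add: permute_list_nth)
  have "(\<Prod>j<length ps. alg_norm (permute_list \<sigma> ps ! j) (permute_list \<sigma> x ! j))
      = (\<Prod>j<length ps. alg_norm (ps ! \<sigma> j) (x ! \<sigma> j))"
    by (rule prod.cong) (simp_all add: nth)
  also have "\<dots> = (\<Prod>j<length ps. alg_norm (ps ! j) (x ! j))"
    using prod.permute[OF \<sigma>, of "\<lambda>j. alg_norm (ps ! j) (x ! j)"] by (simp add: comp_def)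
  also have "\<dots> = 1" using x by (simp add: torus_points_def)
  finally show ?thesis
    using x len nth img by (auto simp: torus_points_def)
qed

lemma R_link_permute:
  assumes ps: "monic_nonconst ps" and \<sigma>: "\<sigma> permutes {..<length ps}" and link: "R_link ps a b"
  shows "R_link (permute_list \<sigma> ps) (permute_list \<sigma> a) (permute_list \<sigma> b)"
proof -
  obtain f where f: "rational_curve ps f" and a: "specialize 0 f = a" and b: "specialize 1 f = b"
    using link R_link_iff_rational_curve[OF ps] by blast
  have \<sigma>f: "\<sigma> permutes {..<length f}"
    using f \<sigma> length_torus_point[of f "lift_polys ps"] by (simp add: rational_curve_def)
  have "permute_list \<sigma> f \<in> torus_points (lift_polys (permute_list \<sigma> ps))"
    using torus_points_permute[of \<sigma> "lift_polys ps" f] f \<sigma>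
    by (simp add: rational_curve_def permute_list_map)
  then have "rational_curve (permute_list \<sigma> ps) (permute_list \<sigma> f)"
    using f \<sigma>f by (simp add: rational_curve_def)
  moreover have "specialize c (permute_list \<sigma> f) = permute_list \<sigma> (specialize c f)" for c
    by (simp add: specialize_def permute_list_map[OF \<sigma>f])
  ultimately show ?thesis
    using a b R_link_iff_rational_curve[OF monic_nonconst_permute[OF \<sigma> ps]] by blast
qed

lemma torus_mod_R_permute_iso:
  assumes ps: "monic_nonconst ps" and \<sigma>: "\<sigma> permutes {..<length ps}"
  shows "torus_mod_R ps \<cong> torus_mod_R (permute_list \<sigma> ps)"
proof (rule torus_mod_R_iso[where \<psi> = "permute_list (inv_into UNIV \<sigma>)"])
  let ?qs = "permute_list \<sigma> ps"
  have \<sigma>': "inv_into UNIV \<sigma> permutes {..<length ?qs}" using permutes_inv[OF \<sigma>] by simp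
  show "monic_nonconst ?qs" using monic_nonconst_permute[OF \<sigma> ps] .
  show "permute_list \<sigma> \<in> hom (torus_group ps) (torus_group ?qs)"
  proof (rule homI)
    fix x y assume "x \<in> carrier (torus_group ps)" "y \<in> carrier (torus_group ps)"
    then have len: "length x = length ps" "length y = length ps" by (simp_all add: length_torus_point)
    show "permute_list \<sigma> (x \<otimes>\<^bsub>torus_group ps\<^esub> y) =
        permute_list \<sigma> x \<otimes>\<^bsub>torus_group ?qs\<^esub> permute_list \<sigma> y"
    proof (rule nth_equalityI)
      fix j assume "j < length (permute_list \<sigma> (x \<otimes>\<^bsub>torus_group ps\<^esub> y))"
      then have j: "j < length ps" "\<sigma> j < length ps" using permutes_in_image[OF \<sigma>, of j] by simp_all
      then show "permute_list \<sigma> (x \<otimes>\<^bsub>torus_group ps\<^esub> y) ! j =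
          (permute_list \<sigma> x \<otimes>\<^bsub>torus_group ?qs\<^esub> permute_list \<sigma> y) ! j"
        using len by (simp add: permute_list_def)
    qed simp
  qed (use torus_points_permute[OF \<sigma>] in simp)
  show "permute_list \<sigma> ` torus_points ps = torus_points ?qs"
  proof (intro equalityI subsetI)
    fix z assume "z \<in> torus_points ?qs"
    then have "permute_list (inv_into UNIV \<sigma>) z \<in> torus_points ps"
      "z = permute_list \<sigma> (permute_list (inv_into UNIV \<sigma>) z)"
      using torus_points_permute[OF \<sigma>'] permute_list_inv_cancel[OF \<sigma>] \<sigma>
        permute_list_inv_cancel[of "inv_into UNIV \<sigma>" z] permutes_inv_inv[OF \<sigma>] \<sigma>'
      by (auto simp: length_torus_point)
    then show "z \<in> permute_list \<sigma> ` torus_points ps" by blast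
  qed (use torus_points_permute[OF \<sigma>] in blast)
  show "R_link ps a b \<Longrightarrow> R_link ?qs (permute_list \<sigma> a) (permute_list \<sigma> b)" for a b
    by (rule R_link_permute[OF ps \<sigma>])
  show "R_link ?qs a b \<Longrightarrow>
      R_link ps (permute_list (inv_into UNIV \<sigma>) a) (permute_list (inv_into UNIV \<sigma>) b)" for a b
    using R_link_permute[OF monic_nonconst_permute[OF \<sigma> ps] \<sigma>'] permute_list_inv_cancel[OF \<sigma>]
    by simp
  show "permute_list (inv_into UNIV \<sigma>) (replicate (length ?qs) 1) = replicate (length ps) 1"
    using permute_list_replicate[OF \<sigma>'] by simp
  show "R_equiv ps x (permute_list (inv_into UNIV \<sigma>) (permute_list \<sigma> x))"
    if "x \<in> torus_points ps" for x
    using that \<sigma> permute_list_inv_cancel[of \<sigma> x] by (simp add: length_torus_point R_equiv_def)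
qed (rule ps)

section \<open>Repeated factors\<close>

fun merge_head :: "'a::field poly \<Rightarrow> 'a poly list \<Rightarrow> 'a poly list" where
  "merge_head p (x0 # x1 # xs) = (x0 * x1) mod p # xs"
| "merge_head p xs = xs"

fun pad_head :: "'a::field poly list \<Rightarrow> 'a poly list" where
  "pad_head (x # xs) = x # 1 # xs"
| "pad_head [] = []"

lemma monic_nonconst_Cons_dup: "monic_nonconst (p # qs) \<Longrightarrow> monic_nonconst (p # p # qs)"
  by (simp add: monic_nonconst_def)

lemma torus_points_Cons_ConsE:
  assumes "x \<in> torus_points (p # q # qs)"
  obtains x0 x1 xs where "x = x0 # x1 # xs"
  using length_torus_point[OF assms] by (auto simp: length_Suc_conv)

lemma Cons_Cons_torus_points_iff:
  "x0 # x1 # xs \<in> torus_points (p # q # qs) \<longleftrightarrow>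
     degree x0 < degree p \<and> degree x1 < degree q \<and> length xs = length qs \<and>
     (\<forall>j<length qs. degree (xs!j) < degree (qs!j)) \<and>
     alg_norm p x0 * alg_norm q x1 * (\<Prod>j<length qs. alg_norm (qs!j) (xs!j)) = 1"
  unfolding Cons_torus_points_iff
  by (simp add: prod.lessThan_Suc_shift All_less_Suc2 mult.assoc del: prod.lessThan_Suc) blast

lemma merge_head_mem_torus_points:
  assumes p: "0 < degree p" and x: "x \<in> torus_points (p # p # qs)"
  shows "merge_head p x \<in> torus_points (p # qs)"
proof -
  obtain x0 x1 xs where x_eq: "x = x0 # x1 # xs" using x by (rule torus_points_Cons_ConsE)
  have "p \<noteq> 0" using p by auto
  then have "alg_norm p ((x0 * x1) mod p) = alg_norm p x0 * alg_norm p x1"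
    by (simp add: alg_norm_mod alg_norm_mult)
  then show ?thesis
    using x p unfolding x_eq Cons_Cons_torus_points_iff
    by (simp add: Cons_torus_points_iff degree_mod_less_pos)
qed

lemma pad_head_mem_torus_points:
  assumes "0 < degree p" and y: "y \<in> torus_points (p # qs)"
  shows "pad_head y \<in> torus_points (p # p # qs)"
proof -
  obtain y0 ys where y_eq: "y = y0 # ys" using length_torus_point[OF y] by (auto simp: length_Suc_conv)
  show ?thesis
    using assms unfolding y_eq pad_head.simps Cons_Cons_torus_points_iff
    by (simp add: Cons_torus_points_iff alg_norm_1)
qed

lemma merge_head_pad_head: "y \<in> torus_points (p # qs) \<Longrightarrow> merge_head p (pad_head y) = y"
  by (cases y) (auto simp: Cons_torus_points_iff mod_poly_less)

lemma R_link_merge_head: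
  assumes pqs: "monic_nonconst (p # qs)" and link: "R_link (p # p # qs) a b"
  shows "R_link (p # qs) (merge_head p a) (merge_head p b)"
proof -
  have p: "lead_coeff p = 1" "0 < degree p" using pqs by (simp_all add: monic_nonconst_def)
  obtain f where f: "rational_curve (p # p # qs) f" and a: "specialize 0 f = a"
    and b: "specialize 1 f = b"
    using link R_link_iff_rational_curve[OF monic_nonconst_Cons_dup[OF pqs]] by blast
  then obtain f0 f1 fs where f_eq: "f = f0 # f1 # fs"
    by (auto simp: rational_curve_def elim: torus_points_Cons_ConsE)
  have over: "spec.poly_over c f0" "spec.poly_over c f1" "\<forall>x\<in>set fs. spec.poly_over c x"
    if "c = 0 \<or> c = 1" for c
    using f that by (auto simp: rational_curve_def f_eq)
  have "merge_head (map_poly const_ft p) f \<in> torus_points (lift_polys (p # qs))"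
    using merge_head_mem_torus_points[of "map_poly const_ft p" f "lift_polys qs"] f p
    by (simp add: rational_curve_def)
  moreover have "spec.poly_over c ((f0 * f1) mod map_poly const_ft p)" if "c = 0 \<or> c = 1" for c
    using spec_mod_lift(1)[OF p(1) spec.poly_over_mult[OF over(1,2)[OF that]]] .
  ultimately have "rational_curve (p # qs) (merge_head (map_poly const_ft p) f)"
    using over by (simp add: rational_curve_def f_eq)
  moreover have "specialize c (merge_head (map_poly const_ft p) f) = merge_head p (specialize c f)"
    if "c = 0 \<or> c = 1" for c
    using over[OF that] spec_mod_lift(2)[OF p(1)] by (simp add: f_eq specialize_def
        spec.poly_over_mult spec.map_poly_hom_mult)
  ultimately show ?thesis using a b R_link_iff_rational_curve[OF pqs] by blast
qed

lemma R_link_pad_head: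
  assumes pqs: "monic_nonconst (p # qs)" and link: "R_link (p # qs) a b"
  shows "R_link (p # p # qs) (pad_head a) (pad_head b)"
proof -
  obtain f where f: "rational_curve (p # qs) f" and a: "specialize 0 f = a" and b: "specialize 1 f = b"
    using link R_link_iff_rational_curve[OF pqs] by blast
  then obtain f0 fs where f_eq: "f = f0 # fs"
    by (cases f) (auto simp: rational_curve_def dest: length_torus_point)
  have "pad_head f \<in> torus_points (lift_polys (p # p # qs))"
    using pad_head_mem_torus_points[of "map_poly const_ft p" f "lift_polys qs"] f pqs
    by (simp add: rational_curve_def monic_nonconst_def)
  then have "rational_curve (p # p # qs) (pad_head f)"
    using f by (simp add: rational_curve_def f_eq)
  moreover have "specialize c (pad_head f) = pad_head (specialize c f)" for c
    by (simp add: f_eq specialize_def spec.map_poly_hom_1)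
  ultimately show ?thesis
    using a b R_link_iff_rational_curve[OF monic_nonconst_Cons_dup[OF pqs]] by blast
qed

definition coord :: "'a::field poly fract" where
  "coord = Fract [:0, 1:] 1"

lemma regular_at_coord: "regular_at c coord"
  and eval_at_coord: "eval_at c coord = c"
  by (simp_all add: coord_def regular_at_Fract eval_at_Fract)

lemma segment_curve:
  fixes a :: "'a::field poly"
  shows "spec.poly_over c ([:1 - coord:] + smult coord (map_poly const_ft a))"
    and "map_poly (eval_at c) ([:1 - coord:] + smult coord (map_poly const_ft a)) = [:1 - c:] + smult c a"
proof -
  have one: "1 \<in> {q. regular_at c q}" by (rule spec.one_closed)
  have t: "coord \<in> {q. regular_at c q}" by (simp add: regular_at_coord)
  have "1 - coord \<in> {q. regular_at c q}" and "eval_at c (1 - coord) = 1 - c"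
    using spec.diff_closed[OF one t] spec.hom_diff[OF one t] by (simp_all add: eval_at_coord spec.hom_one)
  then show "spec.poly_over c ([:1 - coord:] + smult coord (map_poly const_ft a))"
    and "map_poly (eval_at c) ([:1 - coord:] + smult coord (map_poly const_ft a)) = [:1 - c:] + smult c a"
    by (simp_all add: spec.poly_over_add spec.poly_over_const spec.poly_over_smult regular_at_coord
        spec.map_poly_hom_add spec.map_poly_hom_const spec.map_poly_hom_smult spec.hom_diff
        spec.one_closed spec.hom_one eval_at_coord)
qed

lemma alg_norm_power_pair:
  fixes p g :: "'a::field poly"
  assumes "p \<noteq> 0" "alg_norm p g \<noteq> 0" "k \<le> degree p"
  shows "alg_norm p (smult (inverse (alg_norm p g)) (g ^ (degree p - k) mod p)) * alg_norm p (g ^ k mod p) = 1"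
proof -
  have "inverse (alg_norm p g) ^ degree p * alg_norm p g ^ (degree p - k) * alg_norm p g ^ k
      = inverse (alg_norm p g) ^ degree p * alg_norm p g ^ degree p"
    using assms(3) by (simp add: mult.assoc power_add[symmetric])
  then show ?thesis
    using assms by (simp add: alg_norm_smult alg_norm_mod alg_norm_power power_mult_distrib[symmetric])
qed

lemma power_pair_curve:
  fixes p :: "'a::field poly" and qs :: "'a poly list" and g :: "'a poly fract poly" and k :: nat
  defines "P \<equiv> map_poly const_ft p"
  defines "f \<equiv> smult (inverse (alg_norm P g)) (g ^ (degree p - k) mod P) # g ^ k mod P #
    replicate (length qs) 1"
  assumes pqs: "monic_nonconst (p # qs)" and k: "k \<le> degree p"
    and g: "\<And>c. c = 0 \<or> c = 1 \<Longrightarrow> spec.poly_over c g \<and> alg_norm p (map_poly (eval_at c) g) \<noteq> 0"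
  shows "rational_curve (p # p # qs) f"
    and "c = 0 \<or> c = 1 \<Longrightarrow> specialize c f =
      smult (inverse (alg_norm p (map_poly (eval_at c) g))) (map_poly (eval_at c) g ^ (degree p - k) mod p)
      # map_poly (eval_at c) g ^ k mod p # replicate (length qs) 1"
proof -
  let ?n = "degree p" and ?D = "alg_norm P g"
  have p: "lead_coeff p = 1" "0 < degree p" using pqs by (simp_all add: monic_nonconst_def)
  have P: "P \<noteq> 0" using p(2) unfolding P_def by (metis degree_0 degree_lift not_less0)
  have D: "regular_at c ?D" "eval_at c ?D = alg_norm p (map_poly (eval_at c) g)"
    if "c = 0 \<or> c = 1" for c
    using spec_alg_norm_lift[OF p(1)] g[OF that] by (simp_all add: P_def)
  have D_nz: "eval_at c ?D \<noteq> 0" if "c = 0 \<or> c = 1" for c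
    using D(2)[OF that] g[OF that] by simp
  then have "?D \<noteq> 0" using spec.hom_zero[of 0] by force
  have inv_D: "regular_at c (inverse ?D)" "eval_at c (inverse ?D) = inverse (eval_at c ?D)"
    if "c = 0 \<or> c = 1" for c
    using regular_at_inverse[OF D(1)[OF that] D_nz[OF that]] by simp_all
  have power_mod: "spec.poly_over c (g ^ j mod P)"
    "map_poly (eval_at c) (g ^ j mod P) = map_poly (eval_at c) g ^ j mod p"
    if "c = 0 \<or> c = 1" for c j
  proof -
    have g_over: "spec.poly_over c g" using g[OF that] ..
    show "spec.poly_over c (g ^ j mod P)"
      "map_poly (eval_at c) (g ^ j mod P) = map_poly (eval_at c) g ^ j mod p"
      using spec_mod_lift[OF p(1) spec.poly_over_power[OF g_over]] spec.map_poly_hom_power[OF g_over]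
      by (simp_all add: P_def)
  qed
  have "f \<in> torus_points (lift_polys (p # p # qs))"
    using alg_norm_power_pair[OF P, of g k] \<open>?D \<noteq> 0\<close> k pqs p(2) degree_mod_less_pos[of P]
      degree_smult_le[of "inverse ?D" "g ^ (?n - k) mod P"]
    by (auto simp: f_def P_def Cons_Cons_torus_points_iff alg_norm_1 monic_nonconst_def)
  moreover have "spec.poly_over c x" if "x \<in> set f" "c = 0 \<or> c = 1" for c x
    using that inv_D[OF that(2)] power_mod[OF that(2)] by (auto simp: f_def spec.poly_over_smult)
  ultimately show "rational_curve (p # p # qs) f" by (simp add: rational_curve_def)
  show "specialize c f =
      smult (inverse (alg_norm p (map_poly (eval_at c) g))) (map_poly (eval_at c) g ^ (?n - k) mod p)
      # map_poly (eval_at c) g ^ k mod p # replicate (length qs) 1" if "c = 0 \<or> c = 1"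
    using inv_D[OF that] D[OF that] power_mod[OF that]
    by (simp add: f_def specialize_def spec.map_poly_hom_smult spec.map_poly_hom_1)
qed

lemma R_link_power_pair:
  fixes p a :: "'a::field poly"
  assumes pqs: "monic_nonconst (p # qs)" and a: "alg_norm p a \<noteq> 0" and k: "k \<le> degree p"
  shows "R_link (p # p # qs) (1 # 1 # replicate (length qs) 1)
     (smult (inverse (alg_norm p a)) (a ^ (degree p - k) mod p) # a ^ k mod p # replicate (length qs) 1)"
proof -
  define g where "g = [:1 - coord:] + smult coord (map_poly const_ft a)"
  have g: "spec.poly_over c g" "map_poly (eval_at c) g = [:1 - c:] + smult c a" for c
    unfolding g_def by (rule segment_curve)+
  have g01: "map_poly (eval_at 0) g = 1" "map_poly (eval_at 1) g = a"
    using g(2) by (simp_all add: one_pCons[symmetric])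
  have g_hyp: "spec.poly_over c g \<and> alg_norm p (map_poly (eval_at c) g) \<noteq> 0"
    if "c = 0 \<or> c = 1" for c
    using that g(1) g01 a by (auto simp: alg_norm_1)
  have "0 < degree p" using pqs by (simp add: monic_nonconst_def)
  then show ?thesis
    using power_pair_curve[OF pqs k g_hyp] g01 a
      R_link_iff_rational_curve[OF monic_nonconst_Cons_dup[OF pqs]]
    by (auto simp: alg_norm_1 mod_poly_less)
qed

lemma R_link_one_imp_R_trivial: "R_link ps (replicate (length ps) 1) x \<Longrightarrow> x \<in> R_trivial ps"
  by (simp add: R_trivial_def R_equiv_def R_link_def equivclp_sym r_into_equivclp)

lemma power_pair_mult_mod:
  fixes p a b :: "'a::field poly"
  assumes p: "0 < degree p" and a: "degree a < degree p" and ab: "(a * b) mod p = 1"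
    and N: "alg_norm p a * alg_norm p b = 1"
  shows "(smult (inverse (alg_norm p a)) (a ^ degree p mod p) *
      smult (inverse (alg_norm p b)) (b ^ (degree p - 1) mod p)) mod p = a"
proof -
  let ?n = "degree p" and ?X = "a ^ degree p mod p" and ?Y = "b ^ (degree p - 1) mod p"
  obtain m where m: "?n = Suc m" using p gr0_implies_Suc by blast
  then have "a ^ ?n * b ^ (?n - 1) = a * (a * b) ^ (?n - 1)"
    by (simp add: power_mult_distrib mult.assoc)
  then have "(?X * ?Y) mod p = (a * (a * b) ^ (?n - 1)) mod p"
    by (simp add: mod_mult_eq)
  also have "\<dots> = (a * ((a * b) ^ (?n - 1) mod p)) mod p"
    by (rule mod_mult_right_eq[symmetric])
  also have "(a * b) ^ (?n - 1) mod p = ((a * b) mod p) ^ (?n - 1) mod p"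
    by (rule power_mod[symmetric])
  also have "\<dots> = 1" using ab p by (simp add: mod_poly_less)
  finally have XY: "(?X * ?Y) mod p = a" using a by (simp add: mod_poly_less)
  have "inverse (alg_norm p b) * inverse (alg_norm p a) = 1"
    using N by (metis inverse_1 inverse_mult_distrib mult.commute)
  then show ?thesis using XY by (simp add: mod_smult_left)
qed

lemma unit_pair_R_trivial:
  fixes p a b :: "'a::field poly"
  assumes pqs: "monic_nonconst (p # qs)"
    and a: "degree a < degree p" and b: "degree b < degree p" and ab: "(a * b) mod p = 1"
  shows "a # b # replicate (length qs) 1 \<in> R_trivial (p # p # qs)"
proof -
  let ?n = "degree p" and ?N = "alg_norm p"
  have p: "0 < degree p" "p \<noteq> 0" using pqs by (auto simp: monic_nonconst_def)
  have N: "?N a * ?N b = 1"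
    using alg_norm_mult[OF p(2), of a b] alg_norm_mod[of p "a * b"] ab by (simp add: alg_norm_1)
  then have "?N a \<noteq> 0" "?N b \<noteq> 0" by auto
  define w0 where "w0 = smult (inverse (?N a)) (a ^ ?n mod p) # 1 # replicate (length qs) 1"
  define w1 where "w1 = smult (inverse (?N b)) (b ^ (?n - 1) mod p) # b # replicate (length qs) 1"
  have "w0 \<in> R_trivial (p # p # qs)"
    using R_link_power_pair[OF pqs \<open>?N a \<noteq> 0\<close>, of 0] p
    by (simp add: w0_def mod_poly_less R_link_one_imp_R_trivial)
  moreover have "w1 \<in> R_trivial (p # p # qs)"
    using R_link_power_pair[OF pqs \<open>?N b \<noteq> 0\<close>, of 1] p b
    by (simp add: w1_def mod_poly_less R_link_one_imp_R_trivial)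
  ultimately have "torus_mult (p # p # qs) w0 w1 \<in> R_trivial (p # p # qs)"
    using subgroup.m_closed[OF R_trivial_subgroup[OF monic_nonconst_Cons_dup[OF pqs]]] by simp
  moreover have "torus_mult (p # p # qs) w0 w1 = a # b # replicate (length qs) 1"
  proof -
    have "(smult (inverse (?N a)) (a ^ ?n mod p) * smult (inverse (?N b)) (b ^ (?n - 1) mod p)) mod p = a"
      using power_pair_mult_mod[OF p(1) a ab N] .
    moreover have "torus_mult qs (replicate (length qs) 1) (replicate (length qs) 1) = replicate (length qs) 1"
      using torus_mult_one_left[OF torus_one_mem[of qs]] pqs by (simp add: monic_nonconst_def)
    ultimately show ?thesis using b by (simp add: w0_def w1_def mod_poly_less)
  qed
  ultimately show ?thesis by simp
qed

lemma R_equiv_pad_head_merge_head: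
  assumes pqs: "monic_nonconst (p # qs)" and x: "x \<in> torus_points (p # p # qs)"
  shows "R_equiv (p # p # qs) x (pad_head (merge_head p x))"
proof -
  obtain x0 x1 xs where x_eq: "x = x0 # x1 # xs" using x by (rule torus_points_Cons_ConsE)
  have p: "0 < degree p" using pqs by (simp add: monic_nonconst_def)
  have "alg_norm p x1 \<noteq> 0" using alg_norm_torus_point_nonzero[OF x, of 1] by (simp add: x_eq)
  then obtain b where b: "degree b < degree p" "(x1 * b) mod p = 1" using inverse_mod_exists p by blast
  let ?w = "x1 # b # replicate (length qs) 1"
  have "degree x1 < degree p" using x by (simp add: x_eq Cons_Cons_torus_points_iff)
  then have "?w \<in> R_trivial (p # p # qs)" using unit_pair_R_trivial[OF pqs _ b] by blast
  then have "R_equiv (p # p # qs) (replicate (length (p # p # qs)) 1) ?w"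
    by (simp add: R_trivial_def R_equiv_def equivclp_sym)
  from R_equiv_mult_right[OF monic_nonconst_Cons_dup[OF pqs] this x]
  have "R_equiv (p # p # qs) x (torus_mult (p # p # qs) ?w x)"
    using torus_mult_one_left[OF x] by simp
  moreover have "torus_mult (p # p # qs) ?w x = pad_head (merge_head p x)"
    using torus_mult_one_left[OF x] b(2) by (simp add: x_eq mult.commute)
  ultimately show ?thesis by simp
qed

lemma torus_mod_R_duplicate_iso:
  assumes pqs: "monic_nonconst (p # qs)"
  shows "torus_mod_R (p # p # qs) \<cong> torus_mod_R (p # qs)"
proof (rule torus_mod_R_iso[where \<phi> = "merge_head p" and \<psi> = pad_head])
  have p: "0 < degree p" using pqs by (simp add: monic_nonconst_def)
  show "merge_head p \<in> hom (torus_group (p # p # qs)) (torus_group (p # qs))"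
  proof (rule homI)
    fix x y assume x: "x \<in> carrier (torus_group (p # p # qs))"
      and y: "y \<in> carrier (torus_group (p # p # qs))"
    obtain x0 x1 xs where "x = x0 # x1 # xs" using x[simplified] by (rule torus_points_Cons_ConsE)
    moreover obtain y0 y1 ys where "y = y0 # y1 # ys" using y[simplified] by (rule torus_points_Cons_ConsE)
    moreover have "((x0 * y0) mod p * ((x1 * y1) mod p)) mod p = ((x0 * x1) mod p * ((y0 * y1) mod p)) mod p"
      by (simp add: mod_mult_eq ac_simps)
    ultimately show "merge_head p (x \<otimes>\<^bsub>torus_group (p # p # qs)\<^esub> y) =
        merge_head p x \<otimes>\<^bsub>torus_group (p # qs)\<^esub> merge_head p y"
      by simp
  qed (simp add: merge_head_mem_torus_points[OF p])
  show "merge_head p ` torus_points (p # p # qs) = torus_points (p # qs)"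
  proof (intro equalityI subsetI)
    fix y assume "y \<in> torus_points (p # qs)"
    then show "y \<in> merge_head p ` torus_points (p # p # qs)"
      using pad_head_mem_torus_points[OF p] merge_head_pad_head by (metis image_eqI)
  qed (use merge_head_mem_torus_points[OF p] in blast)
  show "R_link (p # p # qs) a b \<Longrightarrow> R_link (p # qs) (merge_head p a) (merge_head p b)" for a b
    by (rule R_link_merge_head[OF pqs])
  show "R_link (p # qs) a b \<Longrightarrow> R_link (p # p # qs) (pad_head a) (pad_head b)" for a b
    by (rule R_link_pad_head[OF pqs])
  show "x \<in> torus_points (p # p # qs) \<Longrightarrow> R_equiv (p # p # qs) x (pad_head (merge_head p x))" for x
    by (rule R_equiv_pad_head_merge_head[OF pqs])
qed (use pqs in \<open>simp_all add: monic_nonconst_Cons_dup\<close>)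

text \<open>A repeated factor is moved to the front by a permutation and then removed.\<close>

lemma torus_mod_R_iso_distinct:
  assumes "monic_nonconst ps" "distinct qs" "set qs = set ps"
  shows "torus_mod_R ps \<cong> torus_mod_R qs"
  using assms
proof (induction "length ps" arbitrary: ps rule: less_induct)
  case less
  show ?case
  proof (cases "distinct ps")
    case True
    then have "mset qs = mset ps" using less.prems set_eq_iff_mset_eq_distinct by blast
    then obtain \<sigma> where "\<sigma> permutes {..<length ps}" "permute_list \<sigma> ps = qs"
      by (rule mset_eq_permutation)
    then show ?thesis using torus_mod_R_permute_iso[OF less.prems(1)] by blast
  next
    case False
    then obtain as y bs cs where ps_eq: "ps = as @ [y] @ bs @ [y] @ cs"
      using not_distinct_decomp by blast
    let ?rs = "as @ bs @ cs"
    have "mset (y # y # ?rs) = mset ps" by (simp add: ps_eq)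
    then obtain \<sigma> where \<sigma>: "\<sigma> permutes {..<length ps}" "permute_list \<sigma> ps = y # y # ?rs"
      by (rule mset_eq_permutation)
    have rs: "monic_nonconst (y # ?rs)" using less.prems(1) by (auto simp: monic_nonconst_def ps_eq)
    have "torus_mod_R ps \<cong> torus_mod_R (y # y # ?rs)"
      using torus_mod_R_permute_iso[OF less.prems(1) \<sigma>(1)] \<sigma>(2) by simp
    also have "\<dots> \<cong> torus_mod_R (y # ?rs)" by (rule torus_mod_R_duplicate_iso[OF rs])
    also have "\<dots> \<cong> torus_mod_R qs"
      using less.hyps[OF _ rs less.prems(2)] less.prems(3) by (auto simp: ps_eq)
    finally show ?thesis .
  qed
qed

lemma degree_pos_if_irreducible: "irreducible p \<Longrightarrow> 0 < degree (p :: 'a::field poly)"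
  using is_unit_iff_degree irreducible_not_unit by (fastforce simp: irreducible_def)

theorem mainTheorem13:
  fixes ps :: "'a::field poly list" and r :: "nat list"
  assumes "length r = length ps"
    and "\<forall>i<length ps. sep_ext_poly (ps!i)"
    and "\<forall>i<length r. r!i > 0"
  shows "torus_mod_R ps \<cong>
         torus_mod_R (concat (map (\<lambda>i. replicate (r!i) (ps!i)) [0..<length ps]))"
proof -
  let ?L' = "concat (map (\<lambda>i. replicate (r!i) (ps!i)) [0..<length ps])"
  have ps: "monic_nonconst ps"
    using assms(2) by (auto simp: monic_nonconst_def sep_ext_poly_def in_set_conv_nth
        degree_pos_if_irreducible)
  have set_L': "set ?L' = set ps"
    using assms(1,3) by (fastforce simp: in_set_conv_nth)
  then have L': "monic_nonconst ?L'" using ps by (simp add: monic_nonconst_def)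
  have "torus_mod_R ?L' \<cong> torus_mod_R (remdups ps)"
    by (rule torus_mod_R_iso_distinct[OF L' distinct_remdups]) (simp only: set_remdups set_L')
  then have "torus_mod_R (remdups ps) \<cong> torus_mod_R ?L'"
    by (rule group.iso_sym[OF group_torus_mod_R[OF L']])
  moreover have "torus_mod_R ps \<cong> torus_mod_R (remdups ps)"
    by (rule torus_mod_R_iso_distinct[OF ps distinct_remdups]) simp
  ultimately show ?thesis by (rule iso_trans[rotated])
qed

end
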